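(* Let $n\ge2$, $\kappa\ge1$. The map $\psi:\mathbf S_n\to GL(n\kappa^n,\mathbb R)$ defined by $\psi(\sigma)=P_\sigma\otimes\mathrm{sgn}(\sigma)T_\sigma$ is a group homomorphism, i.e. $\psi(\mu\circ\sigma)=\psi(\mu)\psi(\sigma)$ for all $\mu,\sigma\in\mathbf S_n$; hence $\psi$ is a linear representation of $\mathbf S_n$ on $\mathcal G_{[n;\kappa]}\cong\mathbb R^{n\kappa^n}$.
   Context: $\delta_m^j$ is the $j$-th column of $I_m$, $\mathbf 1_m$ the all-ones column vector of length $m$. For $\sigma\in\mathbf S_n$, $P_\sigma=[\delta_n^{\sigma(1)},\dots,\delta_n^{\sigma(n)}]\in\mathbb R^{n\times n}$. For $i=1,\dots,n$, $\Phi_i=\mathbf 1_{\kappa^{i-1}}^T\otimes I_\kappa\otimes\mathbf 1_{\kappa^{n-i}}^T\in\mathbb R^{\kappa\times\kappa^n}$. The Khatri–Rao product of $A\in\mathbb R^{p\times m}$ and $B\in\mathbb R^{q\times m}$ is $A*B=[\mathrm{Col}_1(A)\otimes\mathrm{Col}_1(B),\dots,\mathrm{Col}_m(A)\otimes\mathrm{Col}_m(B)]$, and $T_\sigma=\Phi_{\sigma^{-1}(1)}*\cdots*\Phi_{\sigma^{-1}(n)}\in\mathbb R^{\kappa^n\times\kappa^n}$. $\mathcal G_{[n;\kappa]}$ (finite games with $n$ players each having $\kappa$ strategies) is identified with $\mathbb R^{n\kappa^n}$ via the structure vector $V_G=[V_1^c,\dots,V_n^c]$, where $c_i(x_1,\dots,x_n)=V_i^c(x_1\otimes\cdots\otimes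 x_n)$ with strategies $j$ identified with $\delta_\kappa^j$. *)

theory Defs
  imports "HOL-Combinatorics.Permutations" "Jordan_Normal_Form.Matrix"
begin

text \<open>Matrices are Jordan_Normal_Form matrices, indexed from 0. Permutations of
  the player set are functions nat to nat permuting {1..n}, as in the paper.\<close>

definition kron_mat :: "real mat \<Rightarrow> real mat \<Rightarrow> real mat" where
  "kron_mat A B = mat (dim_row A * dim_row B) (dim_col A * dim_col B)
     (\<lambda>(i, j). A $$ (i div dim_row B, j div dim_col B) * B $$ (i mod dim_row B, j mod dim_col B))"

definition khatri_rao :: "real mat \<Rightarrow> real mat \<Rightarrow> real mat" where
  "khatri_rao A B = mat (dim_row A * dim_row B) (dim_col A)
     (\<lambda>(i, j). A $$ (i div dim_row B, j) * B $$ (i mod dim_row B, j))"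

definition ones_row :: "nat \<Rightarrow> real mat" where
  "ones_row m = mat 1 m (\<lambda>_. 1)"

text \<open>Iterated Khatri-Rao product A_1 * ... * A_k of matrices with m columns;
  the 1 x m all-ones row is a neutral element, so for k >= 1 this is the usual product.\<close>
fun khatri_rao_list :: "nat \<Rightarrow> real mat list \<Rightarrow> real mat" where
  "khatri_rao_list m [] = ones_row m"
| "khatri_rao_list m (A # As) = khatri_rao A (khatri_rao_list m As)"

text \<open>P_sigma = [delta_n^{sigma(1)}, ..., delta_n^{sigma(n)}]: entry (i,j) (1-based) is 1 iff i = sigma(j).\<close>
definition perm_mat :: "nat \<Rightarrow> (nat \<Rightarrow> nat) \<Rightarrow> real mat" where
  "perm_mat n \<sigma> = mat n n (\<lambda>(i, j). if i + 1 = \<sigma> (j + 1) then 1 else 0)"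

definition Phi :: "nat \<Rightarrow> nat \<Rightarrow> nat \<Rightarrow> real mat" where
  "Phi n \<kappa> i = kron_mat (kron_mat (ones_row (\<kappa> ^ (i - 1))) (1\<^sub>m \<kappa>)) (ones_row (\<kappa> ^ (n - i)))"

definition T_mat :: "nat \<Rightarrow> nat \<Rightarrow> (nat \<Rightarrow> nat) \<Rightarrow> real mat" where
  "T_mat n \<kappa> \<sigma> = khatri_rao_list (\<kappa> ^ n) (map (\<lambda>k. Phi n \<kappa> (Hilbert_Choice.inv \<sigma> k)) [1..<n+1])"

definition psi :: "nat \<Rightarrow> nat \<Rightarrow> (nat \<Rightarrow> nat) \<Rightarrow> real mat" where
  "psi n \<kappa> \<sigma> = kron_mat (perm_mat n \<sigma>) (of_int (sign \<sigma>) \<cdot>\<^sub>m T_mat n \<kappa> \<sigma>)"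

end

theory Submission
  imports Defs
begin

text \<open>Both Kronecker factors of \<open>\<psi>(\<sigma>)\<close> are matrices of maps on indices:
  \<open>P\<^sub>\<sigma>\<close> is the matrix of \<open>\<sigma>\<close> itself, and \<open>T\<^sub>\<sigma>\<close> turns out to be the matrix of the map
  on \<open>{0..<\<kappa>\<^sup>n}\<close> that permutes the \<open>n\<close> base-\<open>\<kappa>\<close> digits of an index (the strategies of the
  \<open>n\<close> players) according to \<open>\<sigma>\<close>. The matrix of a composite map is the product of the matrices,
  so \<open>\<sigma> \<mapsto> P\<^sub>\<sigma>\<close> and \<open>\<sigma> \<mapsto> T\<^sub>\<sigma>\<close> are homomorphisms; the sign is multiplicative, and the
  mixed-product rule \<open>(A \<otimes> B)(C \<otimes> D) = AC \<otimes> BD\<close> combines the factors.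
  Invertibility follows from \<open>\<psi>(id) = I\<close>.\<close>

section \<open>Matrices of maps on indices\<close>

definition fun_mat :: "nat \<Rightarrow> (nat \<Rightarrow> nat) \<Rightarrow> 'a :: semiring_1 mat" where
  "fun_mat N f = mat N N (\<lambda>(i, j). if i = f j then 1 else 0)"

lemma fun_mat_index: "i < N \<Longrightarrow> j < N \<Longrightarrow> fun_mat N f $$ (i, j) = (if i = f j then 1 else 0)"
  by (simp add: fun_mat_def)

lemma fun_mat_cong: "(\<And>j. j < N \<Longrightarrow> f j = g j) \<Longrightarrow> fun_mat N f = fun_mat N g"
  by (rule eq_matI) (auto simp: fun_mat_def)

lemma fun_mat_id: "fun_mat N id = 1\<^sub>m N"
  by (rule eq_matI) (auto simp: fun_mat_def)

lemma fun_mat_mult: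
  assumes "\<And>j. j < N \<Longrightarrow> g j < N"
  shows "fun_mat N f * fun_mat N g = (fun_mat N (f \<circ> g) :: 'a :: semiring_1 mat)"
proof (rule eq_matI)
  fix i j assume "i < dim_row (fun_mat N (f \<circ> g) :: 'a mat)" "j < dim_col (fun_mat N (f \<circ> g) :: 'a mat)"
  then have i: "i < N" and j: "j < N" by (auto simp: fun_mat_def)
  have "(fun_mat N f * fun_mat N g) $$ (i, j) = (\<Sum>k<N. fun_mat N f $$ (i, k) * (fun_mat N g $$ (k, j) :: 'a))"
    using i j by (simp add: fun_mat_def index_mult_mat scalar_prod_def lessThan_atLeast0)
  also have "\<dots> = (\<Sum>k<N. fun_mat N f $$ (i, k) * (if k = g j then 1 else 0))"
    using j by (intro sum.cong) (auto simp: fun_mat_index)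
  also have "\<dots> = fun_mat N f $$ (i, g j)"
    using assms[OF j] by (simp add: if_distrib[of "\<lambda>x. _ * x"] cong: if_cong)
  also have "\<dots> = fun_mat N (f \<circ> g) $$ (i, j)"
    using i j assms[OF j] by (simp add: fun_mat_index)
  finally show "(fun_mat N f * fun_mat N g) $$ (i, j) = (fun_mat N (f \<circ> g) :: 'a mat) $$ (i, j)" .
qed (simp_all add: fun_mat_def)

lemma perm_mat_eq_fun_mat:
  assumes "\<sigma> permutes {1..n}"
  shows "perm_mat n \<sigma> = fun_mat n (\<lambda>j. \<sigma> (j + 1) - 1)"
proof (rule eq_matI)
  fix i j assume "i < dim_row (fun_mat n (\<lambda>j. \<sigma> (j + 1) - 1) :: real mat)"
    "j < dim_col (fun_mat n (\<lambda>j. \<sigma> (j + 1) - 1) :: real mat)"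
  then have "i < n" "j < n" by (auto simp: fun_mat_def)
  moreover have "\<sigma> (j + 1) \<in> {1..n}"
    using permutes_in_image[OF assms] \<open>j < n\<close> by auto
  ultimately show "perm_mat n \<sigma> $$ (i, j) = fun_mat n (\<lambda>j. \<sigma> (j + 1) - 1) $$ (i, j)"
    by (auto simp: perm_mat_def fun_mat_def)
qed (simp_all add: perm_mat_def fun_mat_def)

lemma perm_mat_carrier: "perm_mat n \<sigma> \<in> carrier_mat n n"
  by (simp add: perm_mat_def)

lemma perm_mat_id: "perm_mat n id = 1\<^sub>m n"
  by (rule eq_matI) (auto simp: perm_mat_def)

lemma perm_mat_mult:
  assumes \<mu>: "\<mu> permutes {1..n}" and \<sigma>: "\<sigma> permutes {1..n}"
  shows "perm_mat n (\<mu> \<circ> \<sigma>) = perm_mat n \<mu> * perm_mat n \<sigma>"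
proof -
  have \<sigma>_range: "\<sigma> (j + 1) \<in> {1..n}" if "j < n" for j
    using permutes_in_image[OF \<sigma>] that by auto
  have "perm_mat n (\<mu> \<circ> \<sigma>) = fun_mat n ((\<lambda>j. \<mu> (j + 1) - 1) \<circ> (\<lambda>j. \<sigma> (j + 1) - 1))"
    unfolding perm_mat_eq_fun_mat[OF permutes_compose[OF \<sigma> \<mu>]]
    by (rule fun_mat_cong) (use \<sigma>_range in force)
  also have "\<dots> = perm_mat n \<mu> * perm_mat n \<sigma>"
    unfolding perm_mat_eq_fun_mat[OF \<mu>] perm_mat_eq_fun_mat[OF \<sigma>]
    by (rule fun_mat_mult[symmetric]) (use \<sigma>_range in force)
  finally show ?thesis .
qed

section \<open>The Kronecker product\<close>

lemma kron_mat_dims [simp]: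
  "dim_row (kron_mat A B) = dim_row A * dim_row B"
  "dim_col (kron_mat A B) = dim_col A * dim_col B"
  by (simp_all add: kron_mat_def)

lemma kron_mat_index:
  "i < dim_row A * dim_row B \<Longrightarrow> j < dim_col A * dim_col B \<Longrightarrow>
    kron_mat A B $$ (i, j) = A $$ (i div dim_row B, j div dim_col B) * B $$ (i mod dim_row B, j mod dim_col B)"
  by (simp add: kron_mat_def)

lemma sum_lessThan_mult_split:
  fixes h :: "nat \<Rightarrow> 'a :: comm_monoid_add"
  shows "(\<Sum>t<b * d. h t) = (\<Sum>p<b. \<Sum>q<d. h (p * d + q))"
proof -
  have "sum h {p * d..<p * d + d} = (\<Sum>q<d. h (p * d + q))" for p
    using sum.shift_bounds_nat_ivl[of h 0 "p * d" d] by (simp add: lessThan_atLeast0 add.commute)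
  then show ?thesis
    by (simp add: sum.nat_group[symmetric])
qed

lemma kron_mat_mult:
  assumes A: "A \<in> carrier_mat a b" and B: "B \<in> carrier_mat c d"
    and C: "C \<in> carrier_mat b e" and D: "D \<in> carrier_mat d f"
  shows "kron_mat A B * kron_mat C D = kron_mat (A * C) (B * D)"
proof (rule eq_matI)
  fix i j assume "i < dim_row (kron_mat (A * C) (B * D))" "j < dim_col (kron_mat (A * C) (B * D))"
  then have i: "i < a * c" and j: "j < e * f" using A B C D by auto
  then have "i div c < a" "j div f < e" "i mod c < c" "j mod f < f"
    by (auto simp: less_mult_imp_div_less intro!: mod_less_divisor intro: gr0I)
  have "(kron_mat A B * kron_mat C D) $$ (i, j) =
      (\<Sum>t<b * d. kron_mat A B $$ (i, t) * kron_mat C D $$ (t, j))"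
    using i j A B C D by (simp add: index_mult_mat scalar_prod_def lessThan_atLeast0)
  also have "\<dots> = (\<Sum>p<b. \<Sum>q<d. kron_mat A B $$ (i, p * d + q) * kron_mat C D $$ (p * d + q, j))"
    by (rule sum_lessThan_mult_split)
  also have "\<dots> = (\<Sum>p<b. \<Sum>q<d. (A $$ (i div c, p) * C $$ (p, j div f)) * (B $$ (i mod c, q) * D $$ (q, j mod f)))"
  proof (intro sum.cong refl)
    fix p q assume p: "p \<in> {..<b}" and q: "q \<in> {..<d}"
    have "p * d + q < (p + 1) * d" using q by simp
    also have "\<dots> \<le> b * d" using p by (intro mult_right_mono) auto
    finally have "p * d + q < b * d" .
    with i j q A B C D show "kron_mat A B $$ (i, p * d + q) * kron_mat C D $$ (p * d + q, j) =
       (A $$ (i div c, p) * C $$ (p, j div f)) * (B $$ (i mod c, q) * D $$ (q, j mod f))"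
      by (simp add: kron_mat_index)
  qed
  also have "\<dots> = (\<Sum>p<b. A $$ (i div c, p) * C $$ (p, j div f)) * (\<Sum>q<d. B $$ (i mod c, q) * D $$ (q, j mod f))"
    by (simp add: sum_product)
  also have "\<dots> = (A * C) $$ (i div c, j div f) * (B * D) $$ (i mod c, j mod f)"
    using \<open>i div c < a\<close> \<open>j div f < e\<close> \<open>i mod c < c\<close> \<open>j mod f < f\<close> A B C D
    by (simp add: index_mult_mat scalar_prod_def lessThan_atLeast0)
  also have "\<dots> = kron_mat (A * C) (B * D) $$ (i, j)"
    using i j A B C D by (simp add: kron_mat_index)
  finally show "(kron_mat A B * kron_mat C D) $$ (i, j) = kron_mat (A * C) (B * D) $$ (i, j)" .
qed (use A B C D in auto)

lemma kron_mat_one: "kron_mat (1\<^sub>m a) (1\<^sub>m b) = 1\<^sub>m (a * b)"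
proof (rule eq_matI)
  fix i j assume "i < dim_row (1\<^sub>m (a * b) :: real mat)" "j < dim_col (1\<^sub>m (a * b) :: real mat)"
  then have i: "i < a * b" and j: "j < a * b" by auto
  then have "i div b < a" "j div b < a" "b > 0" by (auto simp: less_mult_imp_div_less intro: gr0I)
  moreover have "(i div b = j div b \<and> i mod b = j mod b) \<longleftrightarrow> i = j"
    by (metis div_mult_mod_eq)
  ultimately show "kron_mat (1\<^sub>m a) (1\<^sub>m b) $$ (i, j) = 1\<^sub>m (a * b) $$ (i, j)"
    using i j by (auto simp: kron_mat_index)
qed simp_all

section \<open>Base-\<open>\<kappa>\<close> digits\<close>

definition digit :: "nat \<Rightarrow> nat \<Rightarrow> nat \<Rightarrow> nat" where
  "digit \<kappa> j x = x div \<kappa> ^ j mod \<kappa>"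

lemma digit_less: "\<kappa> > 0 \<Longrightarrow> digit \<kappa> j x < \<kappa>"
  by (simp add: digit_def)

lemma digit_Suc: "digit \<kappa> (Suc j) x = digit \<kappa> j (x div \<kappa>)"
  by (simp add: digit_def div_mult2_eq)

lemma digit_mod_power:
  assumes "\<kappa> > 0" "j < a"
  shows "digit \<kappa> j (x mod \<kappa> ^ a) = digit \<kappa> j x"
proof -
  have split: "\<kappa> ^ a = \<kappa> ^ j * \<kappa> ^ (a - j)"
    using assms by (simp add: power_add[symmetric])
  have "x mod \<kappa> ^ a = \<kappa> ^ j * (x div \<kappa> ^ j mod \<kappa> ^ (a - j)) + x mod \<kappa> ^ j"
    unfolding split by (rule mod_mult2_eq)
  then have "x mod \<kappa> ^ a div \<kappa> ^ j = x div \<kappa> ^ j mod \<kappa> ^ (a - j)"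
    using assms by simp
  moreover have "\<kappa> dvd \<kappa> ^ (a - j)"
    using assms by simp
  ultimately show ?thesis
    by (simp add: digit_def mod_mod_cancel)
qed

lemma digits_eq_imp_eq:
  assumes "x < \<kappa> ^ n" "y < \<kappa> ^ n" "\<And>j. j < n \<Longrightarrow> digit \<kappa> j x = digit \<kappa> j y"
  shows "x = y"
  using assms
proof (induction n arbitrary: x y)
  case (Suc n)
  have "x div \<kappa> < \<kappa> ^ n" "y div \<kappa> < \<kappa> ^ n"
    using Suc.prems(1,2) by (auto simp: less_mult_imp_div_less mult.commute)
  moreover have "digit \<kappa> j (x div \<kappa>) = digit \<kappa> j (y div \<kappa>)" if "j < n" for j
    using Suc.prems(3)[of "Suc j"] that by (simp add: digit_Suc)
  ultimately have "x div \<kappa> = y div \<kappa>"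
    by (rule Suc.IH)
  moreover have "x mod \<kappa> = y mod \<kappa>"
    using Suc.prems(3)[of 0] by (simp add: digit_def)
  ultimately show ?case
    by (metis div_mult_mod_eq)
qed simp

fun of_digits :: "nat \<Rightarrow> (nat \<Rightarrow> nat) \<Rightarrow> nat \<Rightarrow> nat" where
  "of_digits \<kappa> a 0 = 0"
| "of_digits \<kappa> a (Suc n) = a 0 + \<kappa> * of_digits \<kappa> (\<lambda>j. a (Suc j)) n"

lemma of_digits_less_digit_of_digits:
  assumes "\<And>j. j < n \<Longrightarrow> a j < \<kappa>"
  shows "of_digits \<kappa> a n < \<kappa> ^ n \<and> (\<forall>j<n. digit \<kappa> j (of_digits \<kappa> a n) = a j)"
  using assms
proof (induction n arbitrary: a)
  case (Suc n)
  let ?y = "of_digits \<kappa> (\<lambda>j. a (Suc j)) n"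
  have IH: "?y < \<kappa> ^ n" "\<forall>j<n. digit \<kappa> j ?y = a (Suc j)"
    using Suc by auto
  have a0: "a 0 < \<kappa>"
    using Suc.prems by simp
  have "a 0 + \<kappa> * ?y < \<kappa> * (?y + 1)"
    using a0 by simp
  also have "\<dots> \<le> \<kappa> * \<kappa> ^ n"
    using IH(1) by (intro mult_left_mono) auto
  finally have "of_digits \<kappa> a (Suc n) < \<kappa> ^ Suc n"
    by simp
  moreover have "(a 0 + \<kappa> * ?y) div \<kappa> = ?y"
    using a0 by simp
  then have "digit \<kappa> j (of_digits \<kappa> a (Suc n)) = a j" if "j < Suc n" for j
    using a0 IH(2) that by (cases j) (simp_all add: digit_Suc, simp add: digit_def)
  ultimately show ?case
    by blast
qed simp

lemma of_digits_less: "(\<And>j. j < n \<Longrightarrow> a j < \<kappa>) \<Longrightarrow> of_digits \<kappa> a n < \<kappa> ^ n"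
  using of_digits_less_digit_of_digits by blast

lemma digit_of_digits: "(\<And>j. j < n \<Longrightarrow> a j < \<kappa>) \<Longrightarrow> j < n \<Longrightarrow> digit \<kappa> j (of_digits \<kappa> a n) = a j"
  using of_digits_less_digit_of_digits by blast

section \<open>Iterated Khatri-Rao products\<close>

lemma khatri_rao_dims [simp]:
  "dim_row (khatri_rao A B) = dim_row A * dim_row B"
  "dim_col (khatri_rao A B) = dim_col A"
  by (simp_all add: khatri_rao_def)

lemma khatri_rao_list_carrier:
  "(\<And>A. A \<in> set As \<Longrightarrow> A \<in> carrier_mat \<kappa> m) \<Longrightarrow>
    khatri_rao_list m As \<in> carrier_mat (\<kappa> ^ length As) m"
proof (induction As)
  case (Cons A As)
  then have "dim_row A = \<kappa>" "dim_col A = m" "dim_row (khatri_rao_list m As) = \<kappa> ^ length As"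
    by auto
  then show ?case
    by (intro carrier_matI) simp_all
qed (simp add: ones_row_def)

lemma khatri_rao_list_index:
  assumes "\<And>A. A \<in> set As \<Longrightarrow> A \<in> carrier_mat \<kappa> m" "i < \<kappa> ^ length As" "j < m"
  shows "khatri_rao_list m As $$ (i, j) =
    (\<Prod>k<length As. (As ! k) $$ (digit \<kappa> (length As - 1 - k) i, j))"
  using assms
proof (induction As arbitrary: i)
  case Nil
  then show ?case by (simp add: ones_row_def)
next
  case (Cons A As)
  let ?L = "length As"
  have A: "A \<in> carrier_mat \<kappa> m" and As_carrier: "\<And>B. B \<in> set As \<Longrightarrow> B \<in> carrier_mat \<kappa> m"
    using Cons.prems(1) by auto
  have R: "khatri_rao_list m As \<in> carrier_mat (\<kappa> ^ ?L) m"
    using As_carrier by (rule khatri_rao_list_carrier)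
  have i: "i < \<kappa> * \<kappa> ^ ?L"
    using Cons.prems(2) by simp
  then have "\<kappa> > 0"
    by (auto intro: gr0I)
  have "i div \<kappa> ^ ?L < \<kappa>"
    using i by (rule less_mult_imp_div_less)
  then have leading_digit: "i div \<kappa> ^ ?L = digit \<kappa> ?L i"
    by (simp add: digit_def)
  have "khatri_rao_list m (A # As) $$ (i, j) = A $$ (i div \<kappa> ^ ?L, j) * khatri_rao_list m As $$ (i mod \<kappa> ^ ?L, j)"
    using i Cons.prems(3) A R by (simp add: khatri_rao_def)
  also have "khatri_rao_list m As $$ (i mod \<kappa> ^ ?L, j) =
      (\<Prod>k<?L. (As ! k) $$ (digit \<kappa> (?L - 1 - k) i, j))"
    using Cons.IH[OF As_carrier _ Cons.prems(3)] \<open>\<kappa> > 0\<close> by (simp add: digit_mod_power)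
  finally show ?case
    unfolding leading_digit length_Cons prod.lessThan_Suc_shift by simp
qed

section \<open>The matrices \<open>T\<^sub>\<sigma>\<close>\<close>

lemma power_mult_power_diff: "m \<le> n \<Longrightarrow> a ^ m * a ^ (n - m) = (a :: 'a :: monoid_mult) ^ n"
  by (simp add: power_add[symmetric])

lemma Phi_carrier:
  assumes "1 \<le> i" "i \<le> n"
  shows "Phi n \<kappa> i \<in> carrier_mat \<kappa> (\<kappa> ^ n)"
  using power_minus_mult[of i \<kappa>] power_mult_power_diff[of i n \<kappa>] assms unfolding Phi_def by (intro carrier_matI) (simp_all add: ones_row_def)

lemma Phi_index:
  assumes "1 \<le> i" "i \<le> n" "r < \<kappa>" "c < \<kappa> ^ n"
  shows "Phi n \<kappa> i $$ (r, c) = (if r = digit \<kappa> (n - i) c then 1 else 0)"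
proof -
  have pow: "\<kappa> ^ (i - 1) * \<kappa> = \<kappa> ^ i" "\<kappa> ^ i * \<kappa> ^ (n - i) = \<kappa> ^ n"
    using power_minus_mult[of i \<kappa>] power_mult_power_diff[of i n \<kappa>] assms(1,2) by simp_all
  have high: "c div \<kappa> ^ (n - i) < \<kappa> ^ i"
    using assms(4) pow(2) by (metis less_mult_imp_div_less)
  then have "c div \<kappa> ^ (n - i) div \<kappa> < \<kappa> ^ (i - 1)"
    using pow(1) by (metis less_mult_imp_div_less)
  with assms pow high have "Phi n \<kappa> i $$ (r, c) = (if r mod \<kappa> = c div \<kappa> ^ (n - i) mod \<kappa> then 1 else 0)"
    unfolding Phi_def by (simp add: kron_mat_index ones_row_def)
  with assms(3) show ?thesis
    by (simp add: digit_def)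
qed

lemma prod_indicator:
  "finite K \<Longrightarrow> (\<Prod>k\<in>K. if P k then 1 else 0 :: 'a :: comm_semiring_1) = (if \<forall>k\<in>K. P k then 1 else 0)"
  by (induction K rule: finite_induct) auto

text \<open>Digit \<open>j\<close> of an index in \<open>{0..<\<kappa>\<^sup>n}\<close>, counted from the least significant one,
  is the strategy of player \<open>n - j\<close>. Row digit \<open>j\<close> of \<open>T\<^sub>\<sigma>\<close> is matched with column digit
  \<open>digit_source n \<sigma> j\<close>.\<close>
definition digit_source :: "nat \<Rightarrow> (nat \<Rightarrow> nat) \<Rightarrow> nat \<Rightarrow> nat" where
  "digit_source n \<sigma> j = n - Hilbert_Choice.inv \<sigma> (n - j)"

lemma digit_source_less:
  assumes "\<sigma> permutes {1..n}" "j < n"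
  shows "digit_source n \<sigma> j < n"
  using permutes_in_image[OF permutes_inv[OF assms(1)], of "n - j"] assms(2)
  by (auto simp: digit_source_def)

lemma digit_source_id: "j < n \<Longrightarrow> digit_source n id j = j"
  by (simp add: digit_source_def inv_id)

lemma digit_source_compose:
  assumes \<mu>: "\<mu> permutes {1..n}" and \<sigma>: "\<sigma> permutes {1..n}" and "j < n"
  shows "digit_source n (\<mu> \<circ> \<sigma>) j = digit_source n \<sigma> (digit_source n \<mu> j)"
proof -
  have "Hilbert_Choice.inv (\<mu> \<circ> \<sigma>) = Hilbert_Choice.inv \<sigma> \<circ> Hilbert_Choice.inv \<mu>"
    using \<mu> \<sigma> by (intro o_inv_distrib) (auto simp: permutes_bij)
  moreover have "Hilbert_Choice.inv \<mu> (n - j) \<in> {1..n}"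
    using permutes_in_image[OF permutes_inv[OF \<mu>], of "n - j"] \<open>j < n\<close> by auto
  ultimately show ?thesis
    by (simp add: digit_source_def)
qed

lemma Phi_inv_carrier:
  assumes "\<sigma> permutes {1..n}" "k \<in> {1..n}"
  shows "Phi n \<kappa> (Hilbert_Choice.inv \<sigma> k) \<in> carrier_mat \<kappa> (\<kappa> ^ n)"
proof -
  have "Hilbert_Choice.inv \<sigma> k \<in> {1..n}"
    using permutes_in_image[OF permutes_inv[OF assms(1)]] assms(2) by simp
  then show ?thesis
    by (intro Phi_carrier) auto
qed

lemma T_mat_carrier:
  assumes "\<sigma> permutes {1..n}"
  shows "T_mat n \<kappa> \<sigma> \<in> carrier_mat (\<kappa> ^ n) (\<kappa> ^ n)"
proof -
  let ?As = "map (\<lambda>k. Phi n \<kappa> (Hilbert_Choice.inv \<sigma> k)) [1..<n+1]"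
  have "khatri_rao_list (\<kappa> ^ n) ?As \<in> carrier_mat (\<kappa> ^ length ?As) (\<kappa> ^ n)"
    using Phi_inv_carrier[OF assms] by (intro khatri_rao_list_carrier) (auto simp del: upt_Suc)
  then show ?thesis
    by (simp add: T_mat_def del: upt_Suc)
qed

lemma T_mat_index:
  assumes \<sigma>: "\<sigma> permutes {1..n}" and "\<kappa> > 0" and r: "r < \<kappa> ^ n" and c: "c < \<kappa> ^ n"
  shows "T_mat n \<kappa> \<sigma> $$ (r, c) = (if \<forall>j<n. digit \<kappa> j r = digit \<kappa> (digit_source n \<sigma> j) c then 1 else 0)"
proof -
  let ?As = "map (\<lambda>k. Phi n \<kappa> (Hilbert_Choice.inv \<sigma> k)) [1..<n+1]"
  have "T_mat n \<kappa> \<sigma> $$ (r, c) = (\<Prod>k<n. (?As ! k) $$ (digit \<kappa> (n - 1 - k) r, c))"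
    unfolding T_mat_def using Phi_inv_carrier[OF \<sigma>] r c
    by (subst khatri_rao_list_index) (auto simp del: upt_Suc)
  also have "\<dots> = (\<Prod>j<n. (?As ! (n - Suc j)) $$ (digit \<kappa> j r, c))"
    by (subst prod.nat_diff_reindex[symmetric]) (intro prod.cong; simp add: Suc_diff_Suc)
  also have "\<dots> = (\<Prod>j<n. if digit \<kappa> j r = digit \<kappa> (digit_source n \<sigma> j) c then 1 else 0)"
  proof (intro prod.cong refl)
    fix j assume "j \<in> {..<n}"
    then have "?As ! (n - Suc j) = Phi n \<kappa> (Hilbert_Choice.inv \<sigma> (n - j))"
      "Hilbert_Choice.inv \<sigma> (n - j) \<in> {1..n}"
      using permutes_in_image[OF permutes_inv[OF \<sigma>], of "n - j"] by (auto simp: Suc_diff_Suc simp del: upt_Suc)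
    then show "(?As ! (n - Suc j)) $$ (digit \<kappa> j r, c) =
        (if digit \<kappa> j r = digit \<kappa> (digit_source n \<sigma> j) c then 1 else 0)"
      using c \<open>\<kappa> > 0\<close> by (simp add: Phi_index digit_less digit_source_def)
  qed
  finally show ?thesis
    by (simp add: prod_indicator)
qed

definition permute_digits :: "nat \<Rightarrow> nat \<Rightarrow> (nat \<Rightarrow> nat) \<Rightarrow> nat \<Rightarrow> nat" where
  "permute_digits \<kappa> n \<sigma> c = of_digits \<kappa> (\<lambda>j. digit \<kappa> (digit_source n \<sigma> j) c) n"

lemma permute_digits_less: "\<kappa> > 0 \<Longrightarrow> permute_digits \<kappa> n \<sigma> c < \<kappa> ^ n"
  by (simp add: permute_digits_def of_digits_less digit_less)

lemma digit_permute_digits: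
  "\<kappa> > 0 \<Longrightarrow> j < n \<Longrightarrow> digit \<kappa> j (permute_digits \<kappa> n \<sigma> c) = digit \<kappa> (digit_source n \<sigma> j) c"
  by (simp add: permute_digits_def digit_of_digits digit_less)

lemma permute_digits_id:
  assumes "\<kappa> > 0" "c < \<kappa> ^ n"
  shows "permute_digits \<kappa> n id c = c"
proof (rule digits_eq_imp_eq)
  show "permute_digits \<kappa> n id c < \<kappa> ^ n"
    using assms(1) by (rule permute_digits_less)
  show "digit \<kappa> j (permute_digits \<kappa> n id c) = digit \<kappa> j c" if "j < n" for j
    using assms(1) that by (simp add: digit_permute_digits digit_source_id)
qed (rule assms(2))

lemma permute_digits_compose:
  assumes \<mu>: "\<mu> permutes {1..n}" and \<sigma>: "\<sigma> permutes {1..n}" and "\<kappa> > 0"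
  shows "permute_digits \<kappa> n (\<mu> \<circ> \<sigma>) = permute_digits \<kappa> n \<mu> \<circ> permute_digits \<kappa> n \<sigma>"
proof
  fix c
  show "permute_digits \<kappa> n (\<mu> \<circ> \<sigma>) c = (permute_digits \<kappa> n \<mu> \<circ> permute_digits \<kappa> n \<sigma>) c"
  proof (rule digits_eq_imp_eq)
    fix j assume "j < n"
    then show "digit \<kappa> j (permute_digits \<kappa> n (\<mu> \<circ> \<sigma>) c) = digit \<kappa> j ((permute_digits \<kappa> n \<mu> \<circ> permute_digits \<kappa> n \<sigma>) c)"
      using \<open>\<kappa> > 0\<close> digit_source_less[OF \<mu>]
      by (simp add: digit_permute_digits digit_source_compose[OF \<mu> \<sigma>])
  qed (simp_all add: permute_digits_less \<open>\<kappa> > 0\<close>)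
qed

lemma T_mat_eq_fun_mat:
  assumes \<sigma>: "\<sigma> permutes {1..n}" and "\<kappa> > 0"
  shows "T_mat n \<kappa> \<sigma> = fun_mat (\<kappa> ^ n) (permute_digits \<kappa> n \<sigma>)"
proof (rule eq_matI)
  fix r c assume "r < dim_row (fun_mat (\<kappa> ^ n) (permute_digits \<kappa> n \<sigma>) :: real mat)"
    "c < dim_col (fun_mat (\<kappa> ^ n) (permute_digits \<kappa> n \<sigma>) :: real mat)"
  then have r: "r < \<kappa> ^ n" and c: "c < \<kappa> ^ n"
    by (simp_all add: fun_mat_def)
  have "(\<forall>j<n. digit \<kappa> j r = digit \<kappa> (digit_source n \<sigma> j) c) \<longleftrightarrow> r = permute_digits \<kappa> n \<sigma> c"
  proof
    assume digits: "\<forall>j<n. digit \<kappa> j r = digit \<kappa> (digit_source n \<sigma> j) c"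
    show "r = permute_digits \<kappa> n \<sigma> c"
      using r permute_digits_less[OF \<open>\<kappa> > 0\<close>]
      by (rule digits_eq_imp_eq) (simp add: digits digit_permute_digits[OF \<open>\<kappa> > 0\<close>])
  qed (simp add: digit_permute_digits[OF \<open>\<kappa> > 0\<close>])
  then show "T_mat n \<kappa> \<sigma> $$ (r, c) = fun_mat (\<kappa> ^ n) (permute_digits \<kappa> n \<sigma>) $$ (r, c)"
    unfolding T_mat_index[OF assms r c] fun_mat_index[OF r c] by (rule if_cong) simp_all
qed (simp_all add: fun_mat_def carrier_matD[OF T_mat_carrier[OF \<sigma>]])

lemma T_mat_mult:
  assumes \<mu>: "\<mu> permutes {1..n}" and \<sigma>: "\<sigma> permutes {1..n}" and \<kappa>: "\<kappa> > 0"
  shows "T_mat n \<kappa> (\<mu> \<circ> \<sigma>) = T_mat n \<kappa> \<mu> * T_mat n \<kappa> \<sigma>"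
proof -
  have "T_mat n \<kappa> (\<mu> \<circ> \<sigma>) = fun_mat (\<kappa> ^ n) (permute_digits \<kappa> n \<mu> \<circ> permute_digits \<kappa> n \<sigma>)"
    unfolding T_mat_eq_fun_mat[OF permutes_compose[OF \<sigma> \<mu>] \<kappa>] permute_digits_compose[OF \<mu> \<sigma> \<kappa>] ..
  also have "\<dots> = T_mat n \<kappa> \<mu> * T_mat n \<kappa> \<sigma>"
    unfolding T_mat_eq_fun_mat[OF \<mu> \<kappa>] T_mat_eq_fun_mat[OF \<sigma> \<kappa>]
    by (rule fun_mat_mult[symmetric]) (rule permute_digits_less[OF \<kappa>])
  finally show ?thesis .
qed

lemma T_mat_id:
  assumes \<kappa>: "\<kappa> > 0"
  shows "T_mat n \<kappa> id = 1\<^sub>m (\<kappa> ^ n)"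
proof -
  have "T_mat n \<kappa> id = fun_mat (\<kappa> ^ n) id"
    unfolding T_mat_eq_fun_mat[OF permutes_id \<kappa>] by (rule fun_mat_cong) (simp add: permute_digits_id[OF \<kappa>])
  then show ?thesis
    by (simp add: fun_mat_id)
qed

section \<open>The representation \<open>\<psi>\<close>\<close>

lemma smult_mult_smult_mat:
  assumes "A \<in> carrier_mat nr n" "B \<in> carrier_mat n nc"
  shows "(a \<cdot>\<^sub>m A) * (b \<cdot>\<^sub>m B) = (a * b :: 'a :: comm_semiring_0) \<cdot>\<^sub>m (A * B)"
  using assms by (intro eq_matI) (auto simp: scalar_prod_def sum_distrib_left ac_simps)

lemma psi_carrier:
  assumes "\<sigma> permutes {1..n}"
  shows "psi n \<kappa> \<sigma> \<in> carrier_mat (n * \<kappa> ^ n) (n * \<kappa> ^ n)"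
  by (intro carrier_matI) (simp_all add: psi_def perm_mat_def carrier_matD[OF T_mat_carrier[OF assms]])

lemma psi_mult:
  assumes \<mu>: "\<mu> permutes {1..n}" and \<sigma>: "\<sigma> permutes {1..n}" and \<kappa>: "\<kappa> > 0"
  shows "psi n \<kappa> (\<mu> \<circ> \<sigma>) = psi n \<kappa> \<mu> * psi n \<kappa> \<sigma>"
proof -
  have "sign (\<mu> \<circ> \<sigma>) = sign \<mu> * sign \<sigma>"
    using \<mu> \<sigma> by (intro sign_compose) (auto intro: permutes_imp_permutation)
  then have "of_int (sign (\<mu> \<circ> \<sigma>)) \<cdot>\<^sub>m T_mat n \<kappa> (\<mu> \<circ> \<sigma>) =
      (of_int (sign \<mu>) \<cdot>\<^sub>m T_mat n \<kappa> \<mu>) * (of_int (sign \<sigma>) \<cdot>\<^sub>m T_mat n \<kappa> \<sigma>)"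
    by (simp add: T_mat_mult[OF assms] smult_mult_smult_mat[OF T_mat_carrier[OF \<mu>] T_mat_carrier[OF \<sigma>]])
  moreover have "of_int (sign \<mu>) \<cdot>\<^sub>m T_mat n \<kappa> \<mu> \<in> carrier_mat (\<kappa> ^ n) (\<kappa> ^ n)"
    "of_int (sign \<sigma>) \<cdot>\<^sub>m T_mat n \<kappa> \<sigma> \<in> carrier_mat (\<kappa> ^ n) (\<kappa> ^ n)"
    using T_mat_carrier[OF \<mu>] T_mat_carrier[OF \<sigma>] by simp_all
  ultimately show ?thesis
    unfolding psi_def perm_mat_mult[OF \<mu> \<sigma>] by (simp add: kron_mat_mult[OF perm_mat_carrier _ perm_mat_carrier])
qed

lemma psi_id:
  assumes "\<kappa> > 0"
  shows "psi n \<kappa> id = 1\<^sub>m (n * \<kappa> ^ n)"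
proof -
  have "(1 :: real) \<cdot>\<^sub>m 1\<^sub>m (\<kappa> ^ n) = 1\<^sub>m (\<kappa> ^ n)"
    by (rule eq_matI) auto
  with assms show ?thesis
    by (simp add: psi_def perm_mat_id T_mat_id kron_mat_one)
qed

lemma invertible_matI:
  assumes "A \<in> carrier_mat N N" "B \<in> carrier_mat N N" "A * B = 1\<^sub>m N" "B * A = 1\<^sub>m N"
  shows "invertible_mat A"
  using assms unfolding invertible_mat_def inverts_mat_def by auto

theorem proposition3p18:
  fixes n \<kappa> :: nat
  assumes "n \<ge> 2" and "\<kappa> \<ge> 1"
  shows "(\<forall>\<sigma>. \<sigma> permutes {1..n} \<longrightarrow>
            psi n \<kappa> \<sigma> \<in> carrier_mat (n * \<kappa> ^ n) (n * \<kappa> ^ n) \<and> invertible_mat (psi n \<kappa> \<sigma>))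
       \<and> (\<forall>\<mu> \<sigma>. \<mu> permutes {1..n} \<longrightarrow> \<sigma> permutes {1..n} \<longrightarrow>
            psi n \<kappa> (\<mu> \<circ> \<sigma>) = psi n \<kappa> \<mu> * psi n \<kappa> \<sigma>)"
proof -
  have \<kappa>: "\<kappa> > 0"
    using assms(2) by simp
  have "invertible_mat (psi n \<kappa> \<sigma>)" if \<sigma>: "\<sigma> permutes {1..n}" for \<sigma>
  proof (rule invertible_matI)
    have \<sigma>': "Hilbert_Choice.inv \<sigma> permutes {1..n}"
      using \<sigma> by (rule permutes_inv)
    show "psi n \<kappa> \<sigma> \<in> carrier_mat (n * \<kappa> ^ n) (n * \<kappa> ^ n)"
      "psi n \<kappa> (Hilbert_Choice.inv \<sigma>) \<in> carrier_mat (n * \<kappa> ^ n) (n * \<kappa> ^ n)"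
      using \<sigma> \<sigma>' by (simp_all add: psi_carrier)
    show "psi n \<kappa> \<sigma> * psi n \<kappa> (Hilbert_Choice.inv \<sigma>) = 1\<^sub>m (n * \<kappa> ^ n)"
      "psi n \<kappa> (Hilbert_Choice.inv \<sigma>) * psi n \<kappa> \<sigma> = 1\<^sub>m (n * \<kappa> ^ n)"
      using \<sigma> \<sigma>' \<kappa> by (simp_all add: psi_mult[symmetric] permutes_inv_o psi_id)
  qed
  then show ?thesis
    using psi_carrier psi_mult \<kappa> by blast
qed

end
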